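(* Let $\mathsf{M}$ be a finite set of $N\ge1$ elements and let $\mathcal{C}$ be the set of all clusterings (partitions into nonempty blocks) of $\mathsf{M}$. The proposal kernel $\phi_Y$ on $\mathcal{C}$ described in the context is irreducible.
   Context: Proposal kernel $\phi_Y(\mathbf{A},\mathbf{A}')$ with parameter $\theta_1>0$: given $\mathbf{A}=\{A_1,\dots,A_n\}$, choose a cluster $A_i$ uniformly at random; choose $k\in\{1,\dots,|A_i|\}$ according to the truncated exponential distribution $PE(k;\theta_1)=\frac{1-e^{-\theta_1}}{e^{-\theta_1}}\sum_{m=1}^\infty\exp[-\theta_1((m-1)|A_i|+k)]$; choose a subset of $k$ points of $A_i$ uniformly at random among the $\binom{|A_i|}{k}$ subsets; choose $A_j$ uniformly at random from $(\mathbf{A}\setminus\{A_i\})\cup\{B\}$ where $B$ is an empty set representing a new cluster; move the chosen points from $A_i$ to $A_j$ (discarding $A_i$ if it becomes empty). The resulting clustering is $\mathbf{A}'$. Irreducible means: for every $\mathbf{A},\mathbf{A}'\in\mathcal{C}$ there is $m$ with positive $m$-step transition probability from $\mathbf{A}$ to $\mathbf{A}'$. *)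

theory Defs
  imports Complex_Main "HOL-Library.Disjoint_Sets"
begin

definition clusterings :: "'a set \<Rightarrow> 'a set set set" where
  "clusterings M = {P. partition_on M P}"

text \<open>Truncated exponential distribution PE(k; theta) on {1..n}, n = size of the chosen cluster.\<close>
definition PE :: "real \<Rightarrow> nat \<Rightarrow> nat \<Rightarrow> real" where
  "PE \<theta> n k = (1 - exp (- \<theta>)) / exp (- \<theta>) *
      (\<Sum>m. exp (- \<theta> * (real m * real n + real k)))"
  (* summation index m starts at 0 here, i.e. corresponds to (m-1) for m \<ge> 1 *)

text \<open>Move the points S from cluster Ai to target T (T = {} represents the new empty cluster B),
  discarding Ai if it becomes empty.\<close>
definition move_pts :: "'a set set \<Rightarrow> 'a set \<Rightarrow> 'a set \<Rightarrow> 'a set \<Rightarrow> 'a set set" where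
  "move_pts A Ai S T =
     (A - {Ai, T}) \<union> (if Ai - S = {} then {} else {Ai - S}) \<union> {T \<union> S}"

text \<open>Cluster Ai uniformly among the |A| clusters; k by PE; subset S of size k uniformly;
  target uniformly among (A - {Ai}) \<union> {B}, a set of |A| elements (B represented by {}).\<close>
definition phiY :: "real \<Rightarrow> 'a set set \<Rightarrow> 'a set set \<Rightarrow> real" where
  "phiY \<theta> A A' =
     (\<Sum>Ai\<in>A. (1 / real (card A)) *
       (\<Sum>k\<in>{1..card Ai}. PE \<theta> (card Ai) k *
         (\<Sum>S\<in>{S. S \<subseteq> Ai \<and> card S = k}. (1 / real (card Ai choose k)) *
           (\<Sum>T\<in>(A - {Ai}) \<union> {{}}. (1 / real (card ((A - {Ai}) \<union> {{}}))) *
              (if move_pts A Ai S T = A' then 1 else 0)))))"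

fun phiY_pow :: "real \<Rightarrow> 'a set \<Rightarrow> nat \<Rightarrow> 'a set set \<Rightarrow> 'a set set \<Rightarrow> real" where
  "phiY_pow \<theta> M 0 A A' = (if A = A' then 1 else 0)"
| "phiY_pow \<theta> M (Suc m) A A' =
     (\<Sum>B\<in>clusterings M. phiY_pow \<theta> M m A B * phiY \<theta> B A')"

definition irreducible_on :: "'a set set set \<Rightarrow> (nat \<Rightarrow> 'a set set \<Rightarrow> 'a set set \<Rightarrow> real) \<Rightarrow> bool" where
  "irreducible_on C P \<longleftrightarrow> (\<forall>A\<in>C. \<forall>A'\<in>C. \<exists>m. m \<ge> 1 \<and> P m A A' > 0)"

end

theory Submission
  imports Defs
begin

text \<open>Every clustering can be merged, two clusters at a time, into the one-cluster
  clustering \<open>{M}\<close>, and each merge can be undone by a single move that splits the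
  merged cluster again; both the merge and the split have positive probability under
  \<open>\<phi>\<^sub>Y\<close> because \<open>PE\<close> charges every size.  Hence any two clusterings communicate
  through \<open>{M}\<close>, and a self-loop (moving a whole cluster into a new one) makes every
  state reachable from itself in at least one step.\<close>

lemma PE_pos:
  assumes "\<theta> > 0" "n \<ge> 1"
  shows "PE \<theta> n k > 0"
proof -
  let ?f = "\<lambda>m::nat. exp (- \<theta> * (real m * real n + real k))"
  have geometric: "?f = (\<lambda>m. exp (- \<theta> * real k) * exp (- \<theta> * real n) ^ m)"
    by (rule ext) (simp add: exp_of_nat_mult[symmetric] exp_add[symmetric] algebra_simps)
  have "\<theta> * real n > 0"
    using assms by simp
  then have "summable ?f"
    unfolding geometric by (intro summable_mult summable_geometric) simp
  then have "suminf ?f > 0"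
    by (rule suminf_pos) simp
  moreover have "(1 - exp (- \<theta>)) / exp (- \<theta>) > 0"
    using assms(1) by simp
  ultimately show ?thesis
    unfolding PE_def by (rule mult_pos_pos[rotated])
qed

lemma PE_nonneg: "\<theta> > 0 \<Longrightarrow> 1 \<le> k \<Longrightarrow> k \<le> n \<Longrightarrow> PE \<theta> n k \<ge> 0"
  using PE_pos[of \<theta> n k] by simp

lemma phiY_nonneg:
  assumes "\<theta> > 0"
  shows "phiY \<theta> A A' \<ge> 0"
  unfolding phiY_def by (intro sum_nonneg mult_nonneg_nonneg) (auto simp: PE_nonneg assms)

lemma phiY_pos_if_move:
  assumes "\<theta> > 0" "finite A" "Ai \<in> A" "finite Ai" "S \<subseteq> Ai" "S \<noteq> {}"
    and "T \<in> (A - {Ai}) \<union> {{}}" "move_pts A Ai S T = A'"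
  shows "phiY \<theta> A A' > 0"
proof -
  txt \<open>All factors of the nested sum are nonnegative, so it suffices to exhibit one
    positive summand at each of the four levels: cluster \<open>Ai\<close>, size \<open>card S\<close>, subset \<open>S\<close>,
    target \<open>T\<close>.\<close>
  define target :: "'a set \<Rightarrow> 'a set \<Rightarrow> real" where
    "target C S' = (\<Sum>T\<in>(A - {C}) \<union> {{}}. 1 / real (card ((A - {C}) \<union> {{}})) *
       (if move_pts A C S' T = A' then 1 else 0))" for C S'
  define subset :: "'a set \<Rightarrow> nat \<Rightarrow> real" where
    "subset C k = (\<Sum>S'\<in>{S'. S' \<subseteq> C \<and> card S' = k}. 1 / real (card C choose k) * target C S')"
    for C k
  have target_nonneg: "target C S' \<ge> 0" for C S'
    unfolding target_def by (intro sum_nonneg) auto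
  have subset_nonneg: "subset C k \<ge> 0" for C k
    unfolding subset_def by (intro sum_nonneg mult_nonneg_nonneg target_nonneg) auto
  have card_S: "card S \<in> {1..card Ai}"
    using assms(4-6) by (auto simp: card_mono Suc_le_eq card_gt_0_iff intro: finite_subset)
  have "target Ai S > 0"
    unfolding target_def using assms(2,7,8) by (intro sum_pos2[where i=T]) (auto simp: card_gt_0_iff)
  then have "subset Ai (card S) > 0"
    unfolding subset_def using assms(4,5) card_S target_nonneg
    by (intro sum_pos2[where i=S]) auto
  then have "(\<Sum>k\<in>{1..card Ai}. PE \<theta> (card Ai) k * subset Ai k) > 0"
    using card_S PE_pos[OF assms(1)] subset_nonneg
    by (intro sum_pos2[where i="card S"]) (auto simp: PE_nonneg assms(1))
  moreover have "card A > 0"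
    using assms(2,3) card_gt_0_iff by blast
  ultimately show ?thesis
    unfolding phiY_def target_def[symmetric] subset_def[symmetric] using assms(2,3) subset_nonneg
    by (intro sum_pos2[where i=Ai])
      (auto intro!: divide_nonneg_nonneg sum_nonneg mult_nonneg_nonneg simp: PE_nonneg assms(1))
qed

lemma move_pts_whole_cluster_to_new: "p \<in> P \<Longrightarrow> {} \<notin> P \<Longrightarrow> move_pts P p p {} = P"
  unfolding move_pts_def by auto

lemma move_pts_merge: "move_pts P p p q = insert (p \<union> q) (P - {p, q})"
  unfolding move_pts_def by auto

lemma partition_on_merge:
  assumes "partition_on M P" "p \<in> P" "q \<in> P"
  shows "partition_on M (insert (p \<union> q) (P - {p, q}))"
proof (rule partition_onI)
  have disjnt_P: "disjnt x y" if "x \<in> P" "y \<in> P" "x \<noteq> y" for x y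
    using pairwiseD[OF partition_onD2[OF assms(1)] that] .
  have disjnt_merged: "disjnt (p \<union> q) y" if "y \<in> P - {p, q}" for y
    unfolding disjnt_Un1 using disjnt_P[of p y] disjnt_P[of q y] that assms(2,3) by blast
  fix x y
  assume "x \<in> insert (p \<union> q) (P - {p, q})" "y \<in> insert (p \<union> q) (P - {p, q})" "x \<noteq> y"
  then consider "x = p \<union> q" "y \<in> P - {p, q}" | "y = p \<union> q" "x \<in> P - {p, q}" | "x \<in> P" "y \<in> P"
    by blast
  then show "disjnt x y"
  proof cases
    case 1
    then show ?thesis using disjnt_merged by simp
  next
    case 2
    then show ?thesis using disjnt_sym[OF disjnt_merged] by simp
  next
    case 3
    then show ?thesis using disjnt_P \<open>x \<noteq> y\<close> by simp
  qed
next
  have "\<Union> (insert (p \<union> q) (P - {p, q})) = \<Union> P"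
    using assms(2,3) by auto
  then show "\<Union> (insert (p \<union> q) (P - {p, q})) = M"
    using partition_onD1[OF assms(1)] by simp
  show "{} \<notin> insert (p \<union> q) (P - {p, q})"
    using partition_onD3[OF assms(1)] assms(2) by auto
qed

lemma merged_cluster_notin:
  assumes "partition_on M P" "p \<in> P" "q \<in> P" "p \<noteq> q"
  shows "p \<union> q \<notin> P"
proof
  assume merged: "p \<union> q \<in> P"
  have "p \<union> q = r" if "r \<in> {p, q}" for r
  proof (rule ccontr)
    assume "p \<union> q \<noteq> r"
    then have "(p \<union> q) \<inter> r = {}"
      using disjointD[OF partition_onD2[OF assms(1)] merged] that assms(2,3) by blast
    moreover have "r \<noteq> {}"
      using partition_onD3[OF assms(1)] that assms(2,3) by blast
    ultimately show False
      using that by blast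
  qed
  then show False
    using assms(4) by blast
qed

lemma card_merge_less:
  assumes "finite M" "partition_on M P" "p \<in> P" "q \<in> P" "p \<noteq> q"
  shows "card (insert (p \<union> q) (P - {p, q})) < card P"
proof -
  have "finite P"
    using finite_elements assms(1,2) .
  moreover have "card {p, q} = 2"
    using assms(5) by simp
  moreover have "card {p, q} \<le> card P"
    using \<open>finite P\<close> assms(3,4) by (intro card_mono) auto
  ultimately show ?thesis
    using merged_cluster_notin[OF assms(2-5)] assms(3,4) by (simp add: card_Diff_subset)
qed

lemma move_pts_split:
  assumes "partition_on M P" "p \<in> P" "q \<in> P" "p \<noteq> q"
  shows "move_pts (insert (p \<union> q) (P - {p, q})) (p \<union> q) q {} = P"
proof -
  have "p \<inter> q = {}"
    using disjointD[OF partition_onD2[OF assms(1)]] assms(2-4) by blast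
  then have "(p \<union> q) - q = p"
    by blast
  moreover have "insert (p \<union> q) (P - {p, q}) - {p \<union> q, {}} = P - {p, q}"
    using merged_cluster_notin[OF assms] partition_onD3[OF assms(1)] by blast
  moreover have "p \<noteq> {}"
    using partition_onD3[OF assms(1)] assms(2) by blast
  ultimately have "move_pts (insert (p \<union> q) (P - {p, q})) (p \<union> q) q {} = (P - {p, q}) \<union> {p} \<union> {q}"
    unfolding move_pts_def by simp
  also have "\<dots> = P"
    using assms(2,3) by blast
  finally show ?thesis .
qed

lemma phiY_pos_merge:
  assumes "finite M" "\<theta> > 0" "partition_on M P" "p \<in> P" "q \<in> P" "p \<noteq> q"
  shows "phiY \<theta> P (insert (p \<union> q) (P - {p, q})) > 0"
proof (rule phiY_pos_if_move[where Ai=p and S=p and T=q])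
  show "finite P"
    using finite_elements assms(1,3) .
  show "finite p"
    using partition_onD1[OF assms(3)] assms(1,4) by (auto intro: finite_subset)
  show "p \<noteq> {}"
    using partition_onD3[OF assms(3)] assms(4) by auto
qed (use assms move_pts_merge in auto)

lemma phiY_pos_split:
  assumes "finite M" "\<theta> > 0" "partition_on M P" "p \<in> P" "q \<in> P" "p \<noteq> q"
  shows "phiY \<theta> (insert (p \<union> q) (P - {p, q})) P > 0"
proof (rule phiY_pos_if_move[where Ai="p \<union> q" and S=q and T="{}"])
  show "finite (insert (p \<union> q) (P - {p, q}))"
    using finite_elements[OF assms(1,3)] by simp
  show "finite (p \<union> q)"
    using partition_onD1[OF assms(3)] assms(1,4,5) by (auto intro: finite_subset)
  show "q \<noteq> {}"
    using partition_onD3[OF assms(3)] assms(5) by auto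
qed (use assms(2) move_pts_split[OF assms(3-6)] in auto)

lemma phiY_pos_self:
  assumes "finite M" "\<theta> > 0" "partition_on M P" "p \<in> P"
  shows "phiY \<theta> P P > 0"
proof (rule phiY_pos_if_move[where Ai=p and S=p and T="{}"])
  show "finite P"
    using finite_elements assms(1,3) .
  show "finite p"
    using partition_onD1[OF assms(3)] assms(1,4) by (auto intro: finite_subset)
  show "p \<noteq> {}"
    using partition_onD3[OF assms(3)] assms(4) by auto
  show "move_pts P p p {} = P"
    using move_pts_whole_cluster_to_new partition_onD3 assms(3,4) by blast
qed (use assms in auto)

lemma phiY_pow_nonneg: "\<theta> > 0 \<Longrightarrow> phiY_pow \<theta> M m A B \<ge> 0"
  by (induction m arbitrary: B) (auto intro!: sum_nonneg mult_nonneg_nonneg phiY_nonneg)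

lemma phiY_pow_Suc_pos:
  assumes "finite M" "\<theta> > 0" "phiY_pow \<theta> M m A B > 0" "B \<in> clusterings M" "phiY \<theta> B C > 0"
  shows "phiY_pow \<theta> M (Suc m) A C > 0"
proof -
  have "finite (clusterings M)"
    unfolding clusterings_def using finitely_many_partition_on[OF assms(1)] .
  then show ?thesis
    using assms by (auto intro!: sum_pos2[where i=B] mult_nonneg_nonneg phiY_pow_nonneg phiY_nonneg)
qed

definition phiY_support :: "real \<Rightarrow> 'a set \<Rightarrow> ('a set set \<times> 'a set set) set" where
  "phiY_support \<theta> M = {(A, A'). A \<in> clusterings M \<and> A' \<in> clusterings M \<and> phiY \<theta> A A' > 0}"

lemma phiY_pow_pos_if_trancl:
  assumes "finite M" "\<theta> > 0" "(A, A') \<in> (phiY_support \<theta> M)\<^sup>+"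
  shows "\<exists>m \<ge> 1. phiY_pow \<theta> M m A A' > 0"
  using assms(3)
proof (induction rule: trancl_induct)
  case (base A')
  then have "A \<in> clusterings M" "phiY \<theta> A A' > 0"
    unfolding phiY_support_def by simp_all
  then have "phiY_pow \<theta> M (Suc 0) A A' > 0"
    by (intro phiY_pow_Suc_pos[OF assms(1,2), of 0 A A]) simp_all
  then show ?case
    by (intro exI[of _ "Suc 0"]) simp
next
  case (step B C)
  then obtain m where "phiY_pow \<theta> M m A B > 0"
    by blast
  moreover have "B \<in> clusterings M" "phiY \<theta> B C > 0"
    using step(2) unfolding phiY_support_def by simp_all
  ultimately have "phiY_pow \<theta> M (Suc m) A C > 0"
    by (rule phiY_pow_Suc_pos[OF assms(1,2)])
  then show ?case
    by (intro exI[of _ "Suc m"]) simp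
qed

lemma partition_on_single_block:
  assumes "partition_on M P" "M \<noteq> {}" "\<forall>p\<in>P. \<forall>q\<in>P. p = q"
  shows "P = {M}"
proof -
  have "P \<noteq> {}"
    using partition_onD1[OF assms(1)] assms(2) by auto
  then obtain p where "P = {p}"
    using assms(3) by blast
  then show ?thesis
    using partition_onD1[OF assms(1)] by simp
qed

lemma phiY_support_rtrancl_single_cluster:
  assumes "finite M" "\<theta> > 0" "M \<noteq> {}" "partition_on M P"
  shows "(P, {M}) \<in> (phiY_support \<theta> M)\<^sup>* \<and> ({M}, P) \<in> (phiY_support \<theta> M)\<^sup>*"
  using assms(4)
proof (induction "card P" arbitrary: P rule: less_induct)
  case less
  show ?case
  proof (cases "\<forall>p\<in>P. \<forall>q\<in>P. p = q")
    case True
    then show ?thesis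
      using partition_on_single_block[OF less.prems assms(3)] by simp
  next
    case False
    then obtain p q where pq: "p \<in> P" "q \<in> P" "p \<noteq> q"
      by blast
    define P' where "P' = insert (p \<union> q) (P - {p, q})"
    have P': "partition_on M P'"
      unfolding P'_def using partition_on_merge[OF less.prems pq(1,2)] .
    have "card P' < card P"
      unfolding P'_def using card_merge_less[OF assms(1) less.prems pq] .
    then have "(P', {M}) \<in> (phiY_support \<theta> M)\<^sup>* \<and> ({M}, P') \<in> (phiY_support \<theta> M)\<^sup>*"
      using less.hyps P' by blast
    moreover have "(P, P') \<in> phiY_support \<theta> M" "(P', P) \<in> phiY_support \<theta> M"
      using phiY_pos_merge[OF assms(1,2) less.prems pq] phiY_pos_split[OF assms(1,2) less.prems pq]
        less.prems P' unfolding phiY_support_def clusterings_def P'_def by simp_all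
    ultimately show ?thesis
      by (meson converse_rtrancl_into_rtrancl rtrancl_into_rtrancl)
  qed
qed

theorem lemma19:
  fixes M :: "'a set" and \<theta> :: real
  assumes "finite M" and "card M \<ge> 1" and "\<theta> > 0"
  shows "irreducible_on (clusterings M) (phiY_pow \<theta> M)"
  unfolding irreducible_on_def
proof (intro ballI)
  fix A A' assume "A \<in> clusterings M" "A' \<in> clusterings M"
  then have A: "partition_on M A" and A': "partition_on M A'"
    unfolding clusterings_def by simp_all
  have "M \<noteq> {}"
    using assms(2) by auto
  then obtain p where "p \<in> A"
    using partition_onD1[OF A] by blast
  then have "(A, A) \<in> phiY_support \<theta> M"
    using phiY_pos_self[OF assms(1,3) A] A unfolding phiY_support_def clusterings_def by simp
  moreover have "(A, A') \<in> (phiY_support \<theta> M)\<^sup>*"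
    using phiY_support_rtrancl_single_cluster[OF assms(1,3) \<open>M \<noteq> {}\<close>] A A' by (meson rtrancl_trans)
  ultimately have "(A, A') \<in> (phiY_support \<theta> M)\<^sup>+"
    by (rule rtrancl_into_trancl2)
  then show "\<exists>m \<ge> 1. phiY_pow \<theta> M m A A' > 0"
    by (rule phiY_pow_pos_if_trancl[OF assms(1,3)])
qed

end
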